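(* Let $(X,\Gamma)$ be a $(\mu,\nu)$-path system space. For every $\delta\ge0$ there exists $\theta\ge0$ such that for all $\delta$-constricting maps $\pi_A\colon X\to A$ and $\pi_B\colon X\to B$ we have $\operatorname{diam}_A(B)\le\operatorname{diam}_B(A)+\theta$ and $\operatorname{diam}_B(A)\le\operatorname{diam}_A(B)+\theta$.
   Context: A path is a rectifiable continuous map $\alpha\colon[a,b]\to X$ parametrised by arc length; it is a $(\kappa,\lambda)$-quasi-geodesic if $d(\alpha(t),\alpha(t'))\le|t-t'|\le\kappa d(\alpha(t),\alpha(t'))+\lambda$. A $(\mu,\nu)$-path system space $(X,\Gamma)$ is a geodesic metric space $X$ with a collection $\Gamma$ of paths closed under subpaths, such that any two points are joined by an element of $\Gamma$ and every element is a $(\mu,\nu)$-quasi-geodesic. A map $\pi_A\colon X\to A$ onto a subset $A$ is $\delta$-constricting if (CS1) $d(x,\pi_A(x))\le\delta$ for $x\in A$, and (CS2) for all $x,y\in X$ and $\gamma\in\Gamma$ joining $x$ to $y$, if $d(\pi_A(x),\pi_A(y))>\delta$ then $\gamma$ meets $B_X(\pi_A(x),\delta)$ and $B_X(\pi_A(y),\delta)$. $\operatorname{diam}_A(B)=\operatorname{diam}(\pi_A(B))$. *)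

theory Defs
  imports "HOL-Analysis.Analysis"
begin

(* The metric space X is the whole (nonempty) type 'a. *)

definition geodesic_space :: "'a::metric_space itself \<Rightarrow> bool" where
  "geodesic_space _ \<longleftrightarrow>
     (\<forall>x y::'a. \<exists>g::real \<Rightarrow> 'a. g 0 = x \<and> g (dist x y) = y \<and>
        (\<forall>s\<in>{0..dist x y}. \<forall>t\<in>{0..dist x y}. dist (g s) (g t) = \<bar>s - t\<bar>))"

definition partition_sums :: "(real \<Rightarrow> 'a::metric_space) \<Rightarrow> real \<Rightarrow> real \<Rightarrow> real set" where
  "partition_sums \<alpha> s t =
     {(\<Sum>i<n. dist (\<alpha> (p i)) (\<alpha> (p (Suc i)))) | n p.
        p 0 = s \<and> p n = t \<and> (\<forall>i<n. p i \<le> p (Suc i))}"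

definition rectifiable_on :: "(real \<Rightarrow> 'a::metric_space) \<Rightarrow> real \<Rightarrow> real \<Rightarrow> bool" where
  "rectifiable_on \<alpha> a b \<longleftrightarrow> bdd_above (partition_sums \<alpha> a b)"

definition path_length :: "(real \<Rightarrow> 'a::metric_space) \<Rightarrow> real \<Rightarrow> real \<Rightarrow> real" where
  "path_length \<alpha> s t = Sup (partition_sums \<alpha> s t)"

definition is_path :: "real \<times> real \<times> (real \<Rightarrow> 'a::metric_space) \<Rightarrow> bool" where
  "is_path \<gamma> \<longleftrightarrow> (case \<gamma> of (a, b, \<alpha>) \<Rightarrow>
     a \<le> b \<and> continuous_on {a..b} \<alpha> \<and> rectifiable_on \<alpha> a b \<and>
     (\<forall>s t. a \<le> s \<and> s \<le> t \<and> t \<le> b \<longrightarrow> path_length \<alpha> s t = t - s))"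

definition quasi_geodesic :: "real \<Rightarrow> real \<Rightarrow> real \<times> real \<times> (real \<Rightarrow> 'a::metric_space) \<Rightarrow> bool" where
  "quasi_geodesic k l \<gamma> \<longleftrightarrow> is_path \<gamma> \<and> (case \<gamma> of (a, b, \<alpha>) \<Rightarrow>
     (\<forall>t\<in>{a..b}. \<forall>t'\<in>{a..b}.
        dist (\<alpha> t) (\<alpha> t') \<le> \<bar>t - t'\<bar> \<and> \<bar>t - t'\<bar> \<le> k * dist (\<alpha> t) (\<alpha> t') + l))"

definition joins :: "real \<times> real \<times> (real \<Rightarrow> 'a) \<Rightarrow> 'a \<Rightarrow> 'a \<Rightarrow> bool" where
  "joins \<gamma> x y \<longleftrightarrow> (case \<gamma> of (a, b, \<alpha>) \<Rightarrow> \<alpha> a = x \<and> \<alpha> b = y)"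

definition meets :: "real \<times> real \<times> (real \<Rightarrow> 'a) \<Rightarrow> 'a set \<Rightarrow> bool" where
  "meets \<gamma> S \<longleftrightarrow> (case \<gamma> of (a, b, \<alpha>) \<Rightarrow> (\<exists>t\<in>{a..b}. \<alpha> t \<in> S))"

definition path_system_space ::
  "real \<Rightarrow> real \<Rightarrow> (real \<times> real \<times> (real \<Rightarrow> 'a::metric_space)) set \<Rightarrow> bool" where
  "path_system_space \<mu> \<nu> \<Gamma> \<longleftrightarrow>
     geodesic_space TYPE('a) \<and>
     (\<forall>(a, b, \<alpha>)\<in>\<Gamma>. \<forall>s t. a \<le> s \<and> s \<le> t \<and> t \<le> b \<longrightarrow>
        (\<exists>\<beta>. (s, t, \<beta>) \<in> \<Gamma> \<and> (\<forall>u\<in>{s..t}. \<beta> u = \<alpha> u))) \<and>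
     (\<forall>x y. \<exists>\<gamma>\<in>\<Gamma>. joins \<gamma> x y) \<and>
     (\<forall>\<gamma>\<in>\<Gamma>. quasi_geodesic \<mu> \<nu> \<gamma>)"

definition constricting ::
  "(real \<times> real \<times> (real \<Rightarrow> 'a::metric_space)) set \<Rightarrow> real \<Rightarrow> 'a set \<Rightarrow> ('a \<Rightarrow> 'a) \<Rightarrow> bool" where
  "constricting \<Gamma> \<delta> A \<pi> \<longleftrightarrow>
     range \<pi> = A \<and>
     (\<forall>x\<in>A. dist x (\<pi> x) \<le> \<delta>) \<and>
     (\<forall>x y. \<forall>\<gamma>\<in>\<Gamma>. joins \<gamma> x y \<and> dist (\<pi> x) (\<pi> y) > \<delta> \<longrightarrow>
        meets \<gamma> (ball (\<pi> x) \<delta>) \<and> meets \<gamma> (ball (\<pi> y) \<delta>))"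

definition ediam :: "'a::metric_space set \<Rightarrow> ereal" where
  "ediam S = (SUP x\<in>S. SUP y\<in>S. ereal (dist x y))"

end

theory Submission
  imports Defs
begin

text \<open>Let \<open>x = \<pi>\<^sub>A b\<close>, \<open>x' = \<pi>\<^sub>A b'\<close> with \<open>b, b' \<in> B\<close> far apart. A path of \<open>\<Gamma>\<close> from \<open>b\<close> to \<open>b'\<close> passes
  close to \<open>x\<close>, and every point \<open>p\<close> on such a path is uniformly close to \<open>\<pi>\<^sub>B p\<close>: the two
  subpaths from \<open>b\<close> to \<open>p\<close> and from \<open>p\<close> to \<open>b'\<close> both pass near \<open>\<pi>\<^sub>B p\<close>, on opposite sides of
  \<open>p\<close>, so by the quasi-geodesic inequality \<open>p\<close> is near \<open>\<pi>\<^sub>B p\<close>. Since constricting maps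
  are coarsely Lipschitz, \<open>x\<close> is then uniformly close to \<open>\<pi>\<^sub>B x\<close>, and likewise for \<open>x'\<close>;
  so \<open>d(x, x') \<le> d(\<pi>\<^sub>B x, \<pi>\<^sub>B x') + \<theta>\<close>, where \<open>\<pi>\<^sub>B x, \<pi>\<^sub>B x' \<in> \<pi>\<^sub>B A\<close>.\<close>

lemma ediam_ge_dist:
  assumes "x \<in> S" "y \<in> S"
  shows "ereal (dist x y) \<le> ediam S"
  unfolding ediam_def
proof (rule SUP_upper2[of x])
  show "ereal (dist x y) \<le> (SUP y\<in>S. ereal (dist x y))"
    using assms(2) by (rule SUP_upper)
qed (use assms(1) in simp)

lemma ediam_le_ediam_add:
  assumes "f ` S \<subseteq> T" and "\<And>x y. x \<in> S \<Longrightarrow> y \<in> S \<Longrightarrow> dist x y \<le> dist (f x) (f y) + \<theta>"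
  shows "ediam S \<le> ediam T + ereal \<theta>"
  unfolding ediam_def
proof (intro SUP_least)
  fix x y assume "x \<in> S" "y \<in> S"
  then have "ereal (dist x y) \<le> ereal (dist (f x) (f y)) + ereal \<theta>"
    using assms(2) by simp
  also have "\<dots> \<le> ediam T + ereal \<theta>"
    using \<open>x \<in> S\<close> \<open>y \<in> S\<close> assms(1) by (intro add_right_mono ediam_ge_dist) auto
  finally show "ereal (dist x y) \<le> (SUP x\<in>T. SUP y\<in>T. ereal (dist x y)) + ereal \<theta>"
    unfolding ediam_def .
qed

locale path_system =
  fixes \<mu> \<nu> :: real and \<Gamma> :: "(real \<times> real \<times> (real \<Rightarrow> 'a::metric_space)) set"
  assumes path_system_space: "path_system_space \<mu> \<nu> \<Gamma>"
begin

lemma subpath: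
  assumes "(a, c, \<alpha>) \<in> \<Gamma>" "a \<le> s" "s \<le> t" "t \<le> c"
  obtains \<beta> where "(s, t, \<beta>) \<in> \<Gamma>" "\<And>u. u \<in> {s..t} \<Longrightarrow> \<beta> u = \<alpha> u"
  using path_system_space assms unfolding path_system_space_def by fast

lemma joining_path:
  obtains a c \<alpha> where "(a, c, \<alpha>) \<in> \<Gamma>" "\<alpha> a = x" "\<alpha> c = y"
proof -
  obtain \<gamma> where "\<gamma> \<in> \<Gamma>" "joins \<gamma> x y"
    using path_system_space unfolding path_system_space_def by blast
  then show ?thesis using that unfolding joins_def by (cases \<gamma>) auto
qed

lemma path_interval_nonempty: "(a, c, \<alpha>) \<in> \<Gamma> \<Longrightarrow> a \<le> c"
  using path_system_space unfolding path_system_space_def quasi_geodesic_def is_path_def by auto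

lemma path_dist_le:
  assumes "(a, c, \<alpha>) \<in> \<Gamma>" "t \<in> {a..c}" "t' \<in> {a..c}"
  shows "dist (\<alpha> t) (\<alpha> t') \<le> \<bar>t - t'\<bar>"
  using path_system_space assms unfolding path_system_space_def quasi_geodesic_def by fastforce

lemma path_param_le:
  assumes "(a, c, \<alpha>) \<in> \<Gamma>" "t \<in> {a..c}" "t' \<in> {a..c}"
  shows "\<bar>t - t'\<bar> \<le> \<bar>\<mu>\<bar> * dist (\<alpha> t) (\<alpha> t') + \<bar>\<nu>\<bar>"
proof -
  have "\<bar>t - t'\<bar> \<le> \<mu> * dist (\<alpha> t) (\<alpha> t') + \<nu>"
    using path_system_space assms unfolding path_system_space_def quasi_geodesic_def by fastforce
  moreover have "\<mu> * dist (\<alpha> t) (\<alpha> t') \<le> \<bar>\<mu>\<bar> * dist (\<alpha> t) (\<alpha> t')"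
    by (simp add: mult_right_mono)
  ultimately show ?thesis by linarith
qed

lemma constricting_dist_le:
  assumes "constricting \<Gamma> \<delta> A \<pi>" "\<delta> \<ge> 0"
  shows "dist (\<pi> u) (\<pi> v) \<le> 2 * \<delta> + \<bar>\<mu>\<bar> * dist u v + \<bar>\<nu>\<bar>"
proof (cases "dist (\<pi> u) (\<pi> v) \<le> \<delta>")
  case True
  then show ?thesis using assms(2) by (smt (verit) abs_ge_zero zero_le_dist mult_nonneg_nonneg)
next
  case False
  obtain a c \<alpha> where \<alpha>: "(a, c, \<alpha>) \<in> \<Gamma>" "\<alpha> a = u" "\<alpha> c = v" by (rule joining_path)
  have "meets (a, c, \<alpha>) (ball (\<pi> u) \<delta>) \<and> meets (a, c, \<alpha>) (ball (\<pi> v) \<delta>)"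
    using assms(1) \<alpha> False unfolding constricting_def joins_def by (auto simp: not_le)
  then obtain t t' where t: "t \<in> {a..c}" "dist (\<pi> u) (\<alpha> t) < \<delta>" "t' \<in> {a..c}" "dist (\<pi> v) (\<alpha> t') < \<delta>"
    unfolding meets_def by auto
  have "a \<le> c" using \<alpha>(1) by (rule path_interval_nonempty)
  have "dist (\<alpha> t) (\<alpha> t') \<le> \<bar>t - t'\<bar>" using \<alpha>(1) t(1,3) by (rule path_dist_le)
  also have "\<dots> \<le> \<bar>a - c\<bar>" using t by auto
  also have "\<dots> \<le> \<bar>\<mu>\<bar> * dist u v + \<bar>\<nu>\<bar>"
    using path_param_le[OF \<alpha>(1), of a c] \<alpha> \<open>a \<le> c\<close> by auto
  finally have "dist (\<alpha> t) (\<alpha> t') \<le> \<bar>\<mu>\<bar> * dist u v + \<bar>\<nu>\<bar>" .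
  moreover have "dist (\<pi> u) (\<pi> v) \<le> dist (\<pi> u) (\<alpha> t) + dist (\<alpha> t) (\<alpha> t') + dist (\<pi> v) (\<alpha> t')"
    using dist_triangle[of "\<pi> u" "\<pi> v" "\<alpha> t"] dist_triangle[of "\<alpha> t" "\<pi> v" "\<alpha> t'"]
    by (simp add: dist_commute)
  ultimately show ?thesis using t by linarith
qed

lemma path_to_constricted_set_meets_projection:
  assumes "constricting \<Gamma> \<delta> B \<pi>" "b \<in> B" "(a, c, \<alpha>) \<in> \<Gamma>"
    and "(\<alpha> a = z \<and> \<alpha> c = b) \<or> (\<alpha> a = b \<and> \<alpha> c = z)"
  obtains t where "t \<in> {a..c}" "dist (\<alpha> t) (\<pi> z) \<le> 2 * \<delta>"
proof (cases "dist (\<pi> z) (\<pi> b) \<le> \<delta>")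
  case True
  have "dist b (\<pi> b) \<le> \<delta>" using assms(1,2) unfolding constricting_def by blast
  then have "dist b (\<pi> z) \<le> 2 * \<delta>"
    using True dist_triangle[of b "\<pi> z" "\<pi> b"] by (simp add: dist_commute)
  moreover have "a \<in> {a..c}" "c \<in> {a..c}" using path_interval_nonempty[OF assms(3)] by auto
  ultimately show ?thesis using assms(4) that by metis
next
  case False
  have "meets (a, c, \<alpha>) (ball (\<pi> x) \<delta>) \<and> meets (a, c, \<alpha>) (ball (\<pi> y) \<delta>)"
    if "\<alpha> a = x" "\<alpha> c = y" "dist (\<pi> x) (\<pi> y) > \<delta>" for x y
    using assms(1,3) that unfolding constricting_def joins_def by fastforce
  then have "meets (a, c, \<alpha>) (ball (\<pi> z) \<delta>)"
    using assms(4) False by (auto simp: dist_commute)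
  then obtain t where "t \<in> {a..c}" "dist (\<pi> z) (\<alpha> t) < \<delta>" unfolding meets_def by auto
  moreover from this(2) have "dist (\<alpha> t) (\<pi> z) \<le> 2 * \<delta>"
    using zero_le_dist[of "\<pi> z" "\<alpha> t"] dist_commute[of "\<pi> z" "\<alpha> t"] by linarith
  ultimately show ?thesis using that by blast
qed

lemma path_between_constricted_points_near_projection:
  assumes "constricting \<Gamma> \<delta> B \<pi>" "\<delta> \<ge> 0" "b \<in> B" "b' \<in> B"
    and "(a, c, \<alpha>) \<in> \<Gamma>" "\<alpha> a = b" "\<alpha> c = b'" "t \<in> {a..c}"
  shows "dist (\<alpha> t) (\<pi> (\<alpha> t)) \<le> 2 * \<delta> + 4 * \<bar>\<mu>\<bar> * \<delta> + \<bar>\<nu>\<bar>"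
proof -
  obtain \<beta> where \<beta>: "(a, t, \<beta>) \<in> \<Gamma>" "\<And>u. u \<in> {a..t} \<Longrightarrow> \<beta> u = \<alpha> u"
    using subpath[OF assms(5), of a t] assms(8) by auto
  obtain \<beta>' where \<beta>': "(t, c, \<beta>') \<in> \<Gamma>" "\<And>u. u \<in> {t..c} \<Longrightarrow> \<beta>' u = \<alpha> u"
    using subpath[OF assms(5), of t c] assms(8) by auto
  have "\<beta> a = b" "\<beta> t = \<alpha> t" "\<beta>' t = \<alpha> t" "\<beta>' c = b'"
    using \<beta>(2) \<beta>'(2) assms(6-8) by auto
  then obtain s s' where "s \<in> {a..t}" "dist (\<beta> s) (\<pi> (\<alpha> t)) \<le> 2 * \<delta>"
    and "s' \<in> {t..c}" "dist (\<beta>' s') (\<pi> (\<alpha> t)) \<le> 2 * \<delta>"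
    using path_to_constricted_set_meets_projection[OF assms(1,3) \<beta>(1), of "\<alpha> t"]
      path_to_constricted_set_meets_projection[OF assms(1,4) \<beta>'(1), of "\<alpha> t"] by metis
  then have s: "s \<in> {a..t}" "dist (\<alpha> s) (\<pi> (\<alpha> t)) \<le> 2 * \<delta>"
    and s': "s' \<in> {t..c}" "dist (\<alpha> s') (\<pi> (\<alpha> t)) \<le> 2 * \<delta>"
    using \<beta>(2) \<beta>'(2) by auto
  have ss': "s \<in> {a..c}" "s' \<in> {a..c}" using s s' assms(8) by auto
  have "dist (\<alpha> s) (\<alpha> s') \<le> 4 * \<delta>"
    using s s' dist_triangle[of "\<alpha> s" "\<alpha> s'" "\<pi> (\<alpha> t)"] by (simp add: dist_commute)
  then have "\<bar>\<mu>\<bar> * dist (\<alpha> s) (\<alpha> s') \<le> \<bar>\<mu>\<bar> * (4 * \<delta>)" by (simp add: mult_left_mono)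
  then have "\<bar>s - s'\<bar> \<le> 4 * \<bar>\<mu>\<bar> * \<delta> + \<bar>\<nu>\<bar>" using path_param_le[OF assms(5) ss'] by linarith
  moreover have "dist (\<alpha> t) (\<alpha> s) \<le> \<bar>t - s\<bar>" using path_dist_le[OF assms(5) assms(8) ss'(1)] .
  moreover have "\<bar>t - s\<bar> \<le> \<bar>s - s'\<bar>" using s s' by auto
  moreover have "dist (\<alpha> t) (\<pi> (\<alpha> t)) \<le> dist (\<alpha> t) (\<alpha> s) + dist (\<alpha> s) (\<pi> (\<alpha> t))"
    by (rule dist_triangle)
  ultimately show ?thesis using s(2) by linarith
qed

lemma projection_near_other_projection:
  assumes "constricting \<Gamma> \<delta> A \<pi>A" "constricting \<Gamma> \<delta> B \<pi>B" "\<delta> \<ge> 0"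
    and "b \<in> B" "b' \<in> B" "dist (\<pi>A b) (\<pi>A b') > \<delta>"
  shows "dist (\<pi>A b) (\<pi>B (\<pi>A b)) \<le> 5 * \<delta> + 5 * \<bar>\<mu>\<bar> * \<delta> + 2 * \<bar>\<nu>\<bar>"
proof -
  obtain a c \<alpha> where \<alpha>: "(a, c, \<alpha>) \<in> \<Gamma>" "\<alpha> a = b" "\<alpha> c = b'" by (rule joining_path)
  have "meets (a, c, \<alpha>) (ball (\<pi>A b) \<delta>)"
    using assms(1,6) \<alpha> unfolding constricting_def joins_def by fastforce
  then obtain t where t: "t \<in> {a..c}" "dist (\<pi>A b) (\<alpha> t) < \<delta>" unfolding meets_def by auto
  have "dist (\<alpha> t) (\<pi>B (\<alpha> t)) \<le> 2 * \<delta> + 4 * \<bar>\<mu>\<bar> * \<delta> + \<bar>\<nu>\<bar>"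
    using path_between_constricted_points_near_projection[OF assms(2-5) \<alpha> t(1)] .
  moreover have "dist (\<pi>B (\<alpha> t)) (\<pi>B (\<pi>A b)) \<le> 2 * \<delta> + \<bar>\<mu>\<bar> * dist (\<alpha> t) (\<pi>A b) + \<bar>\<nu>\<bar>"
    using constricting_dist_le[OF assms(2,3)] .
  moreover have "\<bar>\<mu>\<bar> * dist (\<alpha> t) (\<pi>A b) \<le> \<bar>\<mu>\<bar> * \<delta>"
    using t by (simp add: dist_commute mult_left_mono)
  moreover have "dist (\<pi>A b) (\<pi>B (\<pi>A b)) \<le> dist (\<pi>A b) (\<alpha> t) + dist (\<alpha> t) (\<pi>B (\<alpha> t))
      + dist (\<pi>B (\<alpha> t)) (\<pi>B (\<pi>A b))"
    using dist_triangle[of "\<pi>A b" "\<pi>B (\<pi>A b)" "\<alpha> t"]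
      dist_triangle[of "\<alpha> t" "\<pi>B (\<pi>A b)" "\<pi>B (\<alpha> t)"] by linarith
  ultimately show ?thesis using t by linarith
qed

lemma projection_dist_le_other_projection_dist:
  assumes "constricting \<Gamma> \<delta> A \<pi>A" "constricting \<Gamma> \<delta> B \<pi>B" "\<delta> \<ge> 0" "b \<in> B" "b' \<in> B"
  shows "dist (\<pi>A b) (\<pi>A b')
    \<le> dist (\<pi>B (\<pi>A b)) (\<pi>B (\<pi>A b')) + (11 * \<delta> + 10 * \<bar>\<mu>\<bar> * \<delta> + 4 * \<bar>\<nu>\<bar>)"
proof (cases "dist (\<pi>A b) (\<pi>A b') > \<delta>")
  case True
  have "dist (\<pi>A b) (\<pi>B (\<pi>A b)) \<le> 5 * \<delta> + 5 * \<bar>\<mu>\<bar> * \<delta> + 2 * \<bar>\<nu>\<bar>"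
    using projection_near_other_projection[OF assms True] .
  moreover have "dist (\<pi>A b') (\<pi>B (\<pi>A b')) \<le> 5 * \<delta> + 5 * \<bar>\<mu>\<bar> * \<delta> + 2 * \<bar>\<nu>\<bar>"
    using projection_near_other_projection[OF assms(1-3,5,4)] True by (simp add: dist_commute)
  moreover have "dist (\<pi>A b) (\<pi>A b') \<le> dist (\<pi>A b) (\<pi>B (\<pi>A b))
      + dist (\<pi>B (\<pi>A b)) (\<pi>B (\<pi>A b')) + dist (\<pi>A b') (\<pi>B (\<pi>A b'))"
    using dist_triangle[of "\<pi>A b" "\<pi>A b'" "\<pi>B (\<pi>A b)"]
      dist_triangle[of "\<pi>B (\<pi>A b)" "\<pi>A b'" "\<pi>B (\<pi>A b')"] by (simp add: dist_commute)
  ultimately show ?thesis using assms(3) by linarith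
next
  case False
  have "0 \<le> 10 * \<bar>\<mu>\<bar> * \<delta> + 4 * \<bar>\<nu>\<bar>" using assms(3) by simp
  with False assms(3) show ?thesis using zero_le_dist[of "\<pi>B (\<pi>A b)" "\<pi>B (\<pi>A b')"] by linarith
qed

lemma ediam_projection_le:
  assumes "constricting \<Gamma> \<delta> A \<pi>A" "constricting \<Gamma> \<delta> B \<pi>B" "\<delta> \<ge> 0"
  shows "ediam (\<pi>A ` B) \<le> ediam (\<pi>B ` A) + ereal (11 * \<delta> + 10 * \<bar>\<mu>\<bar> * \<delta> + 4 * \<bar>\<nu>\<bar>)"
proof (rule ediam_le_ediam_add)
  show "\<pi>B ` \<pi>A ` B \<subseteq> \<pi>B ` A"
    using assms(1) unfolding constricting_def by blast
  show "dist x y \<le> dist (\<pi>B x) (\<pi>B y) + (11 * \<delta> + 10 * \<bar>\<mu>\<bar> * \<delta> + 4 * \<bar>\<nu>\<bar>)"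
    if "x \<in> \<pi>A ` B" "y \<in> \<pi>A ` B" for x y
    using that projection_dist_le_other_projection_dist[OF assms] by blast
qed

end

theorem mainTheorem11:
  fixes \<mu> \<nu> :: real and \<Gamma> :: "(real \<times> real \<times> (real \<Rightarrow> 'a::metric_space)) set"
  assumes "path_system_space \<mu> \<nu> \<Gamma>"
  shows "\<forall>\<delta>\<ge>0. \<exists>\<theta>\<ge>0. \<forall>(A::'a set) B \<pi>A \<pi>B.
           constricting \<Gamma> \<delta> A \<pi>A \<and> constricting \<Gamma> \<delta> B \<pi>B \<longrightarrow>
             ediam (\<pi>A ` B) \<le> ediam (\<pi>B ` A) + ereal \<theta> \<and>
             ediam (\<pi>B ` A) \<le> ediam (\<pi>A ` B) + ereal \<theta>"
proof (intro allI impI)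
  fix \<delta> :: real assume "\<delta> \<ge> 0"
  interpret path_system \<mu> \<nu> \<Gamma> using assms by unfold_locales
  show "\<exists>\<theta>\<ge>0. \<forall>(A::'a set) B \<pi>A \<pi>B.
           constricting \<Gamma> \<delta> A \<pi>A \<and> constricting \<Gamma> \<delta> B \<pi>B \<longrightarrow>
             ediam (\<pi>A ` B) \<le> ediam (\<pi>B ` A) + ereal \<theta> \<and>
             ediam (\<pi>B ` A) \<le> ediam (\<pi>A ` B) + ereal \<theta>"
    using ediam_projection_le \<open>\<delta> \<ge> 0\<close>
    by (intro exI[of _ "11 * \<delta> + 10 * \<bar>\<mu>\<bar> * \<delta> + 4 * \<bar>\<nu>\<bar>"]) auto
qed

end
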